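(* Let $k\ge2$ and $m\ge2$ be integers and put $n=m(k-1)$. Suppose $A(x)=\sum_{i=0}^{k-1}a_ix^i$ is a monic polynomial of degree $k-1$, $B$ is a polynomial, and $c\in\mathbb C$, $c\neq0$, are such that $$A(x)^m-c\,(x-1)=x^k B(x).$$ Then $A$ satisfies the differential equation $$m\,A'(x)\,(x-1)-A(x)=\big(m(k-1)-1\big)\,x^{k-1};$$ consequently its coefficients are given by $a_{k-1}=1$ and $a_i=\dfrac{m(i+1)}{mi-1}\,a_{i+1}$ for $0\le i\le k-2$. Moreover $c=-a_0^m$.
   Context: This is the normalization of the Davenport–Zannier pair $P=A^m$, $Q=x^kB$, $R=P-Q=c(x-1)$ for a weighted tree of diameter 4 (series $G$) whose central white vertex (at $0$) has degree $k$ and all black vertices have degree $m$. *)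

theory Defs
  imports "HOL-Computational_Algebra.Polynomial"
begin

end

theory Submission
  imports Defs
begin

text \<open>
  Differentiating A^m = c (x - 1) + x^k B and eliminating c gives
  A^(m-1) (m A' (x - 1) - A) = x^(k-1) R for some polynomial R.
  Since A(0)^m = -c \<noteq> 0, the factor A^(m-1) is prime to x, so x^(k-1) divides
  m A' (x - 1) - A. That polynomial has degree at most k - 1, hence it is a constant
  multiple of x^(k-1), the constant being its coefficient m(k - 1) - 1 at x^(k-1).
  The vanishing of its lower coefficients is the stated recurrence.
\<close>

lemma coeff_pderiv_times_linear:
  fixes A :: "'a::idom poly"
  shows "coeff (smult a (pderiv A * [:-1, 1:]) - A) i
       = a * (of_nat i * coeff A i - of_nat (Suc i) * coeff A (Suc i)) - coeff A i"
proof -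
  have "pderiv A * [:-1, 1:] = pCons 0 (pderiv A) - pderiv A"
    by (simp add: mult_pCons_right)
  then show ?thesis
    by (cases i) (simp_all add: coeff_pderiv algebra_simps)
qed

lemma degree_pderiv_times_linear_le:
  fixes A :: "'a::{idom,semiring_char_0} poly"
  shows "degree (smult a (pderiv A * [:-1, 1:]) - A) \<le> degree A"
proof -
  have "degree (pderiv A * [:-1, 1:]) \<le> degree A"
  proof (cases "degree A = 0")
    case False
    have "degree (pderiv A * [:-1, 1:]) \<le> degree (pderiv A) + 1"
      using degree_mult_le[of "pderiv A" "[:-1, 1:]"] by simp
    with False show ?thesis
      by (simp add: degree_pderiv)
  next
    case True
    then show ?thesis
      using pderiv_eq_0_iff[of A] by simp
  qed
  then show ?thesis
    by (intro degree_diff_le order.trans[OF degree_smult_le]) simp_all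
qed

lemma monom_1_dvd_mult_cancel:
  fixes p q :: "'a::idom poly"
  assumes "monom 1 n dvd p * q" and "poly p 0 \<noteq> 0"
  shows "monom 1 n dvd q"
proof (cases "q = 0")
  case False
  have "p \<noteq> 0" using assms(2) by auto
  with False assms(1) have "n \<le> order 0 (p * q)"
    by (simp add: monom_1_dvd_iff)
  also have "\<dots> = order 0 q"
    using \<open>p \<noteq> 0\<close> False assms(2) by (simp add: order_mult order_0I)
  finally show ?thesis using False by (simp add: monom_1_dvd_iff)
qed simp

lemma monom_dvd_degree_le_eq_monom:
  assumes "monom 1 n dvd p" and "degree p \<le> n"
  shows "p = monom (coeff p n) n"
proof (rule poly_eqI)
  fix i
  show "coeff p i = coeff (monom (coeff p n) n) i"
    using assms by (cases i n rule: linorder_cases) (auto simp: monom_1_dvd_iff' coeff_eq_0)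
qed

lemma power_eq_linear_plus_monom_pderiv_identity:
  fixes A B :: "'a::idom poly"
  assumes "A ^ Suc m = smult c [:-1, 1:] + monom 1 (Suc k) * B"
  shows "A ^ m * (smult (of_nat (Suc m)) (pderiv A * [:-1, 1:]) - A)
       = monom 1 k * (([:0, 1:] * pderiv B + smult (of_nat (Suc k)) B) * [:-1, 1:] - [:0, 1:] * B)"
proof -
  define L X :: "'a poly" where "L = [:-1, 1:]" and "X = [:0, 1:]"
  have monom_Suc_k: "monom 1 (Suc k) = monom 1 k * X"
    by (simp add: X_def monom_Suc)
  have "smult (of_nat (Suc m)) (A ^ m) * pderiv A
      = [:c:] + monom 1 (Suc k) * pderiv B + B * smult (of_nat (Suc k)) (monom 1 k)"
    using arg_cong[OF assms, of pderiv] unfolding pderiv_power_Suc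
    by (simp add: pderiv_add pderiv_mult pderiv_smult pderiv_monom pderiv_pCons smult_monom)
  moreover have "A ^ m * (smult (of_nat (Suc m)) (pderiv A * L) - A)
      = smult (of_nat (Suc m)) (A ^ m) * pderiv A * L - A ^ Suc m"
    by (simp add: algebra_simps)
  ultimately have "A ^ m * (smult (of_nat (Suc m)) (pderiv A * L) - A)
      = ([:c:] + monom 1 (Suc k) * pderiv B + B * smult (of_nat (Suc k)) (monom 1 k)) * L
        - ([:c:] * L + monom 1 (Suc k) * B)"
    using assms by (simp add: L_def)
  also have "\<dots> = monom 1 k * ((X * pderiv B + smult (of_nat (Suc k)) B) * L - X * B)"
    unfolding monom_Suc_k by (simp add: algebra_simps)
  finally show ?thesis by (simp add: L_def X_def)
qed

lemma coeff_recurrence_from_pderiv_times_linear: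
  fixes A :: "'a::field_char_0 poly"
  assumes "coeff (smult (of_nat m) (pderiv A * [:-1, 1:]) - A) i = 0" and "m * i \<noteq> 1"
  shows "coeff A i = of_nat (m * (i + 1)) / (of_nat (m * i) - 1) * coeff A (i + 1)"
proof -
  have "(of_nat (m * i) :: 'a) \<noteq> 1"
    using assms(2) of_nat_eq_1_iff by blast
  moreover have "coeff A i * (of_nat (m * i) - 1) = of_nat (m * (i + 1)) * coeff A (i + 1)"
    using assms(1) unfolding coeff_pderiv_times_linear by (simp add: algebra_simps)
  ultimately show ?thesis
    by (simp add: field_simps)
qed

theorem mainTheorem6:
  fixes k m :: nat and A B :: "complex poly" and c :: complex
  assumes "k \<ge> 2" and "m \<ge> 2"
    and "degree A = k - 1" and "lead_coeff A = 1"
    and "c \<noteq> 0"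
    and "A ^ m - smult c [:-1, 1:] = monom 1 k * B"
  shows "smult (of_nat m) (pderiv A * [:-1, 1:]) - A
           = monom (of_nat (m * (k - 1)) - 1) (k - 1)
       \<and> coeff A (k - 1) = 1
       \<and> (\<forall>i. i \<le> k - 2 \<longrightarrow>
             coeff A i = of_nat (m * (i + 1)) / (of_nat (m * i) - 1) * coeff A (i + 1))
       \<and> c = - (coeff A 0 ^ m)"
proof -
  define D where "D = smult (of_nat m) (pderiv A * [:-1, 1:]) - A"
  obtain m' k' where m: "m = Suc m'" and k: "k = Suc k'"
    using assms(1,2) by (metis Suc_le_D numeral_2_eq_2)
  have eq: "A ^ Suc m' = smult c [:-1, 1:] + monom 1 (Suc k') * B"
    using assms(6) unfolding m k by (simp add: algebra_simps)
  have A0: "poly A 0 ^ m = - c"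
    using arg_cong[OF eq, of "\<lambda>p. poly p 0"] by (simp add: m poly_monom)
  then have "poly A 0 \<noteq> 0"
    using assms(5) m by auto
  moreover have "monom 1 k' dvd A ^ m' * D"
    unfolding D_def m power_eq_linear_plus_monom_pderiv_identity[OF eq] by simp
  ultimately have "monom 1 k' dvd D"
    using monom_1_dvd_mult_cancel[of k' "A ^ m'" D] by (simp add: poly_power)
  moreover have "degree D \<le> k'"
    using degree_pderiv_times_linear_le[of m A] assms(3) k unfolding D_def by simp
  moreover have "coeff D k' = of_nat (m * k') - 1"
    unfolding D_def coeff_pderiv_times_linear using assms(3,4) k by (simp add: coeff_eq_0)
  ultimately have D: "D = monom (of_nat (m * (k - 1)) - 1) (k - 1)"
    using monom_dvd_degree_le_eq_monom k by fastforce
  have "coeff A i = of_nat (m * (i + 1)) / (of_nat (m * i) - 1) * coeff A (i + 1)"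
    if "i \<le> k - 2" for i
  proof (rule coeff_recurrence_from_pderiv_times_linear)
    show "coeff (smult (of_nat m) (pderiv A * [:-1, 1:]) - A) i = 0"
      using that assms(1) D unfolding D_def by simp
    show "m * i \<noteq> 1"
      using assms(2) by simp
  qed
  then show ?thesis
    using D A0 assms(3,4) unfolding D_def by (simp add: poly_0_coeff_0)
qed

end
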